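(* Let $k\geq 3$ be an odd integer and let $D$ be a directed graph whose degeneracy is $k$. Then $f(D)<\frac{k-1}{k+1}\,n(D)$.
   Context: Directed graphs are oriented graphs: finite, no loops, no multiple arcs and no pair of antiparallel arcs. $n(D)$ is the number of vertices and $f(D)$ is the minimum size of a set $F\subseteq V(D)$ such that $D-F$ contains no directed cycle. The degeneracy of $D$ is the degeneracy of its underlying undirected graph, i.e. the least $k$ such that there is an ordering of the vertices in which every vertex has at most $k$ neighbours preceding it. *)

theory Defs
  imports Complex_Main
begin

definition oriented_graph :: "'a set \<Rightarrow> ('a \<times> 'a) set \<Rightarrow> bool" where
  "oriented_graph V A \<longleftrightarrow> finite V \<and> A \<subseteq> V \<times> V \<and> irrefl A \<and>
     (\<forall>u v. (u, v) \<in> A \<longrightarrow> (v, u) \<notin> A)"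

definition und_adj :: "('a \<times> 'a) set \<Rightarrow> 'a \<Rightarrow> 'a \<Rightarrow> bool" where
  "und_adj A u v \<longleftrightarrow> (u, v) \<in> A \<or> (v, u) \<in> A"

definition degenerate_ordering :: "'a set \<Rightarrow> ('a \<times> 'a) set \<Rightarrow> nat \<Rightarrow> 'a list \<Rightarrow> bool" where
  "degenerate_ordering V A k xs \<longleftrightarrow> distinct xs \<and> set xs = V \<and>
     (\<forall>i < length xs. card {j. j < i \<and> und_adj A (xs ! i) (xs ! j)} \<le> k)"

definition degeneracy :: "'a set \<Rightarrow> ('a \<times> 'a) set \<Rightarrow> nat" where
  "degeneracy V A = (LEAST k. \<exists>xs. degenerate_ordering V A k xs)"

definition no_dicycle_after_removal :: "'a set \<Rightarrow> ('a \<times> 'a) set \<Rightarrow> 'a set \<Rightarrow> bool" where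
  "no_dicycle_after_removal V A F \<longleftrightarrow> acyclic (A \<inter> ((V - F) \<times> (V - F)))"

definition fvs_number :: "'a set \<Rightarrow> ('a \<times> 'a) set \<Rightarrow> nat" where
  "fvs_number V A = (LEAST m. \<exists>F. F \<subseteq> V \<and> card F = m \<and> no_dicycle_after_removal V A F)"

end

theory Submission
  imports Defs
begin

text \<open>Every nonempty vertex set contains a vertex w with at most k neighbours inside it. Since k
  is odd, the out- or the in-neighbourhood N of w there has fewer than k/2 vertices. Delete w
  and N, take recursively a large induced acyclic subgraph of what remains and put w back: with
  N gone, w is a sink or a source of it, so no cycle appears. Each round keeps one vertex out of
  at most (k+1)/2, which gives an induced acyclic subgraph on more than 2n/(k+1) vertices; its
  complement is a feedback vertex set.\<close>

lemma acyclic_Un_into_sink: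
  assumes acyc: "acyclic R" and no_out: "w \<notin> Domain R" and "w \<notin> X"
  shows "acyclic (R \<union> X \<times> {w})"
proof (rule acyclicI, intro allI notI)
  let ?R' = "R \<union> X \<times> {w}"
  have path: "y = w \<or> (x, y) \<in> R\<^sup>+" if "(x, y) \<in> ?R'\<^sup>+" for x y
    using that
  proof (induction rule: trancl_induct)
    case (step y z)
    then show ?case
      using no_out \<open>w \<notin> X\<close> by (auto intro: trancl_into_trancl)
  qed auto
  fix x
  assume cycle: "(x, x) \<in> ?R'\<^sup>+"
  show False
  proof (cases "x = w")
    case True
    then obtain z where "(w, z) \<in> ?R'"
      using cycle by (auto dest: tranclD)
    with no_out \<open>w \<notin> X\<close> show False by auto
  next
    case False
    with path[OF cycle] acyc show False
      by (simp add: acyclic_def)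
  qed
qed

lemma acyclic_Un_from_source:
  assumes "acyclic R" and "w \<notin> Range R" and "w \<notin> X"
  shows "acyclic (R \<union> {w} \<times> X)"
proof -
  have "acyclic (R\<inverse> \<union> X \<times> {w})"
    using assms by (intro acyclic_Un_into_sink) auto
  moreover have "R\<inverse> \<union> X \<times> {w} = (R \<union> {w} \<times> X)\<inverse>"
    by auto
  ultimately show ?thesis
    by simp
qed

lemma acyclic_Restr_insert_one_sided:
  assumes "asym A" and acyc: "acyclic (Restr A S)" and "w \<notin> S"
    and one_sided: "(\<forall>u\<in>S. (w, u) \<notin> A) \<or> (\<forall>u\<in>S. (u, w) \<notin> A)"
  shows "acyclic (Restr A (insert w S))"
  using one_sided
proof
  assume "\<forall>u\<in>S. (w, u) \<notin> A"
  with \<open>asym A\<close> have "Restr A (insert w S) \<subseteq> Restr A S \<union> S \<times> {w}"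
    by (auto dest: asymD)
  moreover have "acyclic (Restr A S \<union> S \<times> {w})"
    using acyc \<open>w \<notin> S\<close> by (intro acyclic_Un_into_sink) auto
  ultimately show ?thesis
    by (rule acyclic_subset[rotated])
next
  assume "\<forall>u\<in>S. (u, w) \<notin> A"
  with \<open>asym A\<close> have "Restr A (insert w S) \<subseteq> Restr A S \<union> {w} \<times> S"
    by (auto dest: asymD)
  moreover have "acyclic (Restr A S \<union> {w} \<times> S)"
    using acyc \<open>w \<notin> S\<close> by (intro acyclic_Un_from_source) auto
  ultimately show ?thesis
    by (rule acyclic_subset[rotated])
qed

lemma acyclic_Restr_doubleton:
  assumes "asym A"
  shows "acyclic (Restr A {a, b})"
proof -
  have loop_free: "(x, x) \<notin> A" for x
    using assms by (auto dest: asymD)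
  show ?thesis
  proof (cases "a = b")
    case False
    have "(a, b) \<notin> A \<or> (b, a) \<notin> A"
      using assms by (auto dest: asymD)
    then show ?thesis
      using assms False loop_free by (intro acyclic_Restr_insert_one_sided) (auto simp: acyclic_def)
  qed (simp add: loop_free acyclic_def)
qed

definition degenerate :: "'a set \<Rightarrow> ('a \<times> 'a) set \<Rightarrow> nat \<Rightarrow> bool" where
  "degenerate V A k \<longleftrightarrow> (\<forall>W\<subseteq>V. W \<noteq> {} \<longrightarrow> (\<exists>w\<in>W. card {u\<in>W. und_adj A w u} \<le> k))"

lemma degenerate_subset: "degenerate V A k \<Longrightarrow> W \<subseteq> V \<Longrightarrow> degenerate W A k"
  unfolding degenerate_def by (meson order.trans)

text \<open>The last vertex of W in the ordering has all its neighbours in W before it.\<close>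
lemma degenerate_ordering_imp_degenerate:
  assumes ord: "degenerate_ordering V A k xs" and "irrefl A"
  shows "degenerate V A k"
  unfolding degenerate_def
proof (intro allI impI)
  fix W
  assume "W \<subseteq> V" and "W \<noteq> {}"
  have set_xs: "set xs = V" and bound: "\<And>i. i < length xs \<Longrightarrow>
      card {j. j < i \<and> und_adj A (xs ! i) (xs ! j)} \<le> k"
    using ord unfolding degenerate_ordering_def by auto
  define I where "I = {i. i < length xs \<and> xs ! i \<in> W}"
  have "finite I"
    by (simp add: I_def)
  have "I \<noteq> {}"
  proof -
    obtain u where "u \<in> W"
      using \<open>W \<noteq> {}\<close> by blast
    then obtain j where "j < length xs" "xs ! j = u"
      using \<open>W \<subseteq> V\<close> set_xs by (metis in_set_conv_nth subsetD)
    with \<open>u \<in> W\<close> show ?thesis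
      by (auto simp: I_def)
  qed
  define i where "i = Max I"
  have "i \<in> I" and i_last: "\<And>j. j \<in> I \<Longrightarrow> j \<le> i"
    using \<open>finite I\<close> \<open>I \<noteq> {}\<close> by (simp_all add: i_def)
  define J where "J = {j. j < i \<and> und_adj A (xs ! i) (xs ! j)}"
  have "{u\<in>W. und_adj A (xs ! i) u} \<subseteq> (!) xs ` J"
  proof
    fix u
    assume u: "u \<in> {u\<in>W. und_adj A (xs ! i) u}"
    then obtain j where "j < length xs" and u_def: "u = xs ! j"
      using \<open>W \<subseteq> V\<close> set_xs by (metis in_set_conv_nth mem_Collect_eq subsetD)
    with u i_last have "j \<le> i"
      by (simp add: I_def)
    moreover have "j \<noteq> i"
      using u u_def \<open>irrefl A\<close> by (auto simp: und_adj_def irrefl_def)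
    ultimately show "u \<in> (!) xs ` J"
      using u u_def by (auto simp: J_def)
  qed
  then have "card {u\<in>W. und_adj A (xs ! i) u} \<le> card ((!) xs ` J)"
    by (rule card_mono[rotated]) (simp add: J_def)
  also have "\<dots> \<le> card J"
    by (rule card_image_le) (simp add: J_def)
  also have "\<dots> \<le> k"
    using bound \<open>i \<in> I\<close> by (simp add: I_def J_def)
  finally show "\<exists>w\<in>W. card {u\<in>W. und_adj A w u} \<le> k"
    using \<open>i \<in> I\<close> by (auto simp: I_def)
qed

lemma degenerate_obtains_one_sided_vertex:
  assumes "finite V" "V \<noteq> {}" "asym A" "degenerate V A k" "odd k"
  obtains w N where "w \<in> V" "N \<subseteq> V" "w \<notin> N" "2 * card N < k"
    "(\<forall>u\<in>V - insert w N. (w, u) \<notin> A) \<or> (\<forall>u\<in>V - insert w N. (u, w) \<notin> A)"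
proof -
  obtain w where "w \<in> V" and deg: "card {u\<in>V. und_adj A w u} \<le> k"
    using assms(2,4) unfolding degenerate_def by blast
  define Out where "Out = {u\<in>V. (w, u) \<in> A}"
  define In where "In = {u\<in>V. (u, w) \<in> A}"
  have "card Out + card In = card {u\<in>V. und_adj A w u}"
  proof -
    have "Out \<inter> In = {}"
      using \<open>asym A\<close> by (auto simp: Out_def In_def dest: asymD)
    moreover have "Out \<union> In = {u\<in>V. und_adj A w u}"
      by (auto simp: Out_def In_def und_adj_def)
    moreover have "finite Out" "finite In"
      using \<open>finite V\<close> by (simp_all add: Out_def In_def)
    ultimately show ?thesis
      by (metis card_Un_disjoint)
  qed
  with deg \<open>odd k\<close> have "2 * card Out < k \<or> 2 * card In < k"
    by presburger
  moreover have "w \<notin> Out" "w \<notin> In"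
    using \<open>asym A\<close> by (auto simp: Out_def In_def dest: asymD)
  moreover have "Out \<subseteq> V" "In \<subseteq> V"
    by (auto simp: Out_def In_def)
  moreover have "\<forall>u\<in>V - insert w Out. (w, u) \<notin> A" "\<forall>u\<in>V - insert w In. (u, w) \<notin> A"
    by (auto simp: Out_def In_def)
  ultimately show thesis
    using that \<open>w \<in> V\<close> by blast
qed

lemma degenerate_large_acyclic_subset:
  assumes "finite V" "V \<noteq> {}" "asym A" "degenerate V A k" "odd k" "3 \<le> k"
  shows "\<exists>S\<subseteq>V. acyclic (Restr A S) \<and> 2 * card V < (k + 1) * card S"
  using assms(1,2,4)
proof (induction V rule: finite_psubset_induct)
  case (psubset V)
  obtain w N where "w \<in> V" "N \<subseteq> V" "w \<notin> N" "2 * card N < k"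
    and one_sided: "(\<forall>u\<in>V - insert w N. (w, u) \<notin> A) \<or> (\<forall>u\<in>V - insert w N. (u, w) \<notin> A)"
    using degenerate_obtains_one_sided_vertex psubset.prems psubset.hyps assms(3,5) by metis
  define W where "W = V - insert w N"
  have card_V: "card V = card W + card N + 1"
  proof -
    have "V = W \<union> insert w N" and "W \<inter> insert w N = {}"
      using \<open>w \<in> V\<close> \<open>N \<subseteq> V\<close> by (auto simp: W_def)
    moreover have "finite W" "finite N"
      using psubset.hyps \<open>N \<subseteq> V\<close> finite_subset by (auto simp: W_def)
    ultimately show ?thesis
      using \<open>w \<notin> N\<close> by (simp add: card_Un_disjoint)
  qed
  show ?case
  proof (cases "W = {}")
    case False
    moreover have "W \<subset> V"
      using \<open>w \<in> V\<close> by (auto simp: W_def)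
    moreover have "degenerate W A k"
      using psubset.prems(2) by (rule degenerate_subset) (auto simp: W_def)
    ultimately obtain S where "S \<subseteq> W" "acyclic (Restr A S)" "2 * card W < (k + 1) * card S"
      using psubset.IH by blast
    moreover have "w \<notin> S" and "finite S"
      using \<open>S \<subseteq> W\<close> psubset.hyps finite_subset by (auto simp: W_def)
    moreover have "(\<forall>u\<in>S. (w, u) \<notin> A) \<or> (\<forall>u\<in>S. (u, w) \<notin> A)"
      using one_sided \<open>S \<subseteq> W\<close> by (auto simp: W_def)
    ultimately have "acyclic (Restr A (insert w S))"
      and "2 * card V < (k + 1) * card (insert w S)"
      using acyclic_Restr_insert_one_sided[OF \<open>asym A\<close>] card_V \<open>2 * card N < k\<close> by auto
    moreover have "insert w S \<subseteq> V"
      using \<open>S \<subseteq> W\<close> \<open>w \<in> V\<close> by (auto simp: W_def)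
    ultimately show ?thesis
      by blast
  next
    case True
    obtain b where "b \<in> V" and "b \<noteq> w \<or> V = {w}"
      using \<open>w \<in> V\<close> by blast
    then have "2 * card V < (k + 1) * card {w, b}"
      using True card_V \<open>2 * card N < k\<close> \<open>3 \<le> k\<close> by auto
    moreover have "{w, b} \<subseteq> V"
      using \<open>w \<in> V\<close> \<open>b \<in> V\<close> by blast
    ultimately show ?thesis
      using acyclic_Restr_doubleton[OF \<open>asym A\<close>] by blast
  qed
qed

lemma degeneracy_attained:
  assumes "finite V"
  shows "\<exists>xs. degenerate_ordering V A (degeneracy V A) xs"
  unfolding degeneracy_def
proof (rule LeastI_ex)
  obtain xs where "distinct xs" "set xs = V"
    using finite_distinct_list[OF assms] by blast
  moreover have "card {j. j < i \<and> und_adj A (xs ! i) (xs ! j)} \<le> length xs"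
    if "i < length xs" for i
  proof -
    have "card {j. j < i \<and> und_adj A (xs ! i) (xs ! j)} \<le> card {..<i}"
      by (rule card_mono) auto
    with that show ?thesis
      by simp
  qed
  ultimately show "\<exists>k xs. degenerate_ordering V A k xs"
    unfolding degenerate_ordering_def by blast
qed

lemma degeneracy_empty: "degeneracy {} A = 0"
proof -
  have "degenerate_ordering {} A 0 []"
    by (simp add: degenerate_ordering_def)
  then show ?thesis
    unfolding degeneracy_def by (metis (mono_tags) Least_le le_zero_eq)
qed

lemma fvs_number_le_card_Diff:
  assumes "S \<subseteq> V" and "acyclic (Restr A S)"
  shows "fvs_number V A \<le> card (V - S)"
proof -
  have "no_dicycle_after_removal V A (V - S)"
    using assms by (simp add: no_dicycle_after_removal_def double_diff)
  then show ?thesis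
    unfolding fvs_number_def by (blast intro: Least_le)
qed

theorem mainTheorem6:
  fixes V :: "'a set" and A :: "('a \<times> 'a) set" and k :: nat
  assumes "oriented_graph V A"
    and "odd k" and "k \<ge> 3"
    and "degeneracy V A = k"
  shows "real (fvs_number V A) < (real k - 1) / (real k + 1) * real (card V)"
proof -
  have "finite V" "irrefl A" "asym A"
    using assms(1) by (auto simp: oriented_graph_def asym_iff)
  have "V \<noteq> {}"
    using assms(3,4) degeneracy_empty[of A] by auto
  obtain xs where "degenerate_ordering V A k xs"
    using degeneracy_attained[OF \<open>finite V\<close>] assms(4) by metis
  then have "degenerate V A k"
    using \<open>irrefl A\<close> by (rule degenerate_ordering_imp_degenerate)
  then obtain S where "S \<subseteq> V" and "acyclic (Restr A S)"
    and large: "2 * card V < (k + 1) * card S"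
    using degenerate_large_acyclic_subset[OF \<open>finite V\<close> \<open>V \<noteq> {}\<close> \<open>asym A\<close> _ assms(2,3)]
    by blast
  then have "fvs_number V A \<le> card V - card S"
    using fvs_number_le_card_Diff \<open>finite V\<close> by (metis card_Diff_subset finite_subset)
  moreover have "card S \<le> card V"
    using \<open>S \<subseteq> V\<close> \<open>finite V\<close> by (rule card_mono[rotated])
  ultimately have "real (fvs_number V A) \<le> real (card V) - real (card S)"
    by (simp add: of_nat_diff)
  moreover have "2 * real (card V) < (real k + 1) * real (card S)"
    using large by (metis of_nat_1 of_nat_add of_nat_less_iff of_nat_mult of_nat_numeral)
  then have "real (card V) - real (card S) < (real k - 1) / (real k + 1) * real (card V)"
    by (simp add: field_simps)
  ultimately show ?thesis
    by linarith
qed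

end
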